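(* For the reduction instance $NTP([a_j]_{j\in A},W)$, the optimal value satisfies $B(S^* )=W$ if and only if there exists $A^*\subseteq A$ with $\sum_{j\in A^*}a_j=W$.
   Context: Reduction instance. Let $N\ge1$, $A=\{1,\dots,N\}$, positive integers $a_1,\dots,a_N$, positive integer $W\le\sum_{j\in A}a_j$. Set $M=N+\sum_{j\in A}a_j+1$, employees $\mathcal E=\{1,\dots,M\}$ (smaller index = more senior). For $k\in A$: $i_k=k+\sum_{j=1}^{k-1}a_j$ (critical employees), $\mathcal E^S_k=\{i: i_k<i\le i_k+a_k\}$ (stable block). Response delays: $r_{i_k}=\sum_{j=1}^{k}a_j$; for $i\in\mathcal E^S_k$, $r_i=\sum_{j=1}^{k-1}a_j$; $r_M=\sum_{j\in A}a_j$. Let $C^*_0=2\sum_j a_j$ and $H=C^*_0-W$. A schedule $S=(s_i,e_i)_{i\in\mathcal E}$ has $s_i\ge0$, $e_i=s_i+r_i$; it is feasible if $s_1\le\dots\le s_M$ and $e_i\le H$ for all $i$. $b_i=|\{j: i<j,\ e_j<e_i\}|$, $B(S)=\sum_i b_i$. $S^*$ denotes an optimal schedule, i.e. a feasible schedule minimizing $B(S)$. *)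

theory Defs
  imports Complex_Main
begin

text \<open>Reduction instance NTP([a_j]_{j in A}, W), A = {1..N}.
  Employees are 1..M; a schedule is given by the start times s :: nat => real
  (only values on 1..M matter); e_i = s_i + r_i.\<close>

definition total :: "(nat \<Rightarrow> nat) \<Rightarrow> nat \<Rightarrow> nat" where
  "total a N = (\<Sum>j=1..N. a j)"

definition Memp :: "(nat \<Rightarrow> nat) \<Rightarrow> nat \<Rightarrow> nat" where
  "Memp a N = N + total a N + 1"

definition crit :: "(nat \<Rightarrow> nat) \<Rightarrow> nat \<Rightarrow> nat" where
  "crit a k = k + (\<Sum>j=1..<k. a j)"

definition stable :: "(nat \<Rightarrow> nat) \<Rightarrow> nat \<Rightarrow> nat set" where
  "stable a k = {i. crit a k < i \<and> i \<le> crit a k + a k}"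

definition resp :: "(nat \<Rightarrow> nat) \<Rightarrow> nat \<Rightarrow> nat \<Rightarrow> real" where
  "resp a N i =
    (if i = Memp a N then real (total a N)
     else if (\<exists>k\<in>{1..N}. i = crit a k)
       then real (\<Sum>j=1..(THE k. k \<in> {1..N} \<and> i = crit a k). a j)
     else if (\<exists>k\<in>{1..N}. i \<in> stable a k)
       then real (\<Sum>j=1..<(THE k. k \<in> {1..N} \<and> i \<in> stable a k). a j)
     else 0)"

definition Hbound :: "(nat \<Rightarrow> nat) \<Rightarrow> nat \<Rightarrow> nat \<Rightarrow> real" where
  "Hbound a N W = real (2 * total a N) - real W"

definition endt :: "(nat \<Rightarrow> nat) \<Rightarrow> nat \<Rightarrow> (nat \<Rightarrow> real) \<Rightarrow> nat \<Rightarrow> real" where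
  "endt a N s i = s i + resp a N i"

definition feasible :: "(nat \<Rightarrow> nat) \<Rightarrow> nat \<Rightarrow> nat \<Rightarrow> (nat \<Rightarrow> real) \<Rightarrow> bool" where
  "feasible a N W s \<longleftrightarrow>
     (\<forall>i\<in>{1..Memp a N}. 0 \<le> s i \<and> endt a N s i \<le> Hbound a N W) \<and>
     (\<forall>i\<in>{1..Memp a N}. \<forall>j\<in>{1..Memp a N}. i \<le> j \<longrightarrow> s i \<le> s j)"

definition bcount :: "(nat \<Rightarrow> nat) \<Rightarrow> nat \<Rightarrow> (nat \<Rightarrow> real) \<Rightarrow> nat \<Rightarrow> nat" where
  "bcount a N s i = card {j\<in>{1..Memp a N}. i < j \<and> endt a N s j < endt a N s i}"

definition Btot :: "(nat \<Rightarrow> nat) \<Rightarrow> nat \<Rightarrow> (nat \<Rightarrow> real) \<Rightarrow> nat" where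
  "Btot a N s = (\<Sum>i=1..Memp a N. bcount a N s i)"

definition optimal :: "(nat \<Rightarrow> nat) \<Rightarrow> nat \<Rightarrow> nat \<Rightarrow> (nat \<Rightarrow> real) \<Rightarrow> bool" where
  "optimal a N W s \<longleftrightarrow> feasible a N W s \<and>
     (\<forall>s'. feasible a N W s' \<longrightarrow> Btot a N s \<le> Btot a N s')"

end

theory Submission
  imports Defs
begin

(* The critical employee of block k responds a_k later than the a_k stable employees that
   follow it. Either it finishes after all of them, and then it is blocked by a_k employees, or
   one of them starts at least a_k after it; since start times are nondecreasing, the last
   employee then starts no earlier than the total weight of the blocks of the second kind. As
   the last employee has response delay sum a_j and must end by H = 2 sum a_j - W, the blocks of
   the first kind weigh at least W. Hence B(S) >= W for every feasible S, and B(S) = W yields a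
   subset of weight exactly W. Conversely, for A* of weight W let every employee start at the
   total weight of the blocks outside A* preceding it: then exactly the critical employees of A*
   are blocked, each by its a_k stable employees, and the last employee ends exactly at H. *)

definition in_block :: "(nat \<Rightarrow> nat) \<Rightarrow> nat \<Rightarrow> nat \<Rightarrow> bool" where
  "in_block a k i \<longleftrightarrow> crit a k \<le> i \<and> i \<le> crit a k + a k"

lemma in_block_iff: "in_block a k i \<longleftrightarrow> i = crit a k \<or> i \<in> stable a k"
  unfolding in_block_def stable_def by auto

lemma crit_Suc: "1 \<le> k \<Longrightarrow> crit a (Suc k) = crit a k + a k + 1"
  unfolding crit_def by (simp add: sum.atLeastLessThan_Suc)

lemma crit_ge_1: "1 \<le> k \<Longrightarrow> 1 \<le> crit a k"
  unfolding crit_def by simp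

lemma crit_Suc_eq_Memp: "crit a (Suc N) = Memp a N"
  unfolding crit_def Memp_def total_def by (simp add: atLeastLessThanSuc_atLeastAtMost)

lemma block_less_crit: "1 \<le> k \<Longrightarrow> k < k' \<Longrightarrow> crit a k + a k < crit a k'"
proof (induction k')
  case (Suc k')
  then show ?case
    using crit_Suc[of k a] crit_Suc[of k' a] by (cases "k = k'") auto
qed simp

lemma crit_less_crit_iff: "1 \<le> j \<Longrightarrow> 1 \<le> k \<Longrightarrow> crit a j < crit a k \<longleftrightarrow> j < k"
  using block_less_crit[of j k a] block_less_crit[of k j a] by (cases j k rule: linorder_cases) auto

lemma inj_on_crit: "inj_on (crit a) {1..N}"
  by (rule inj_onI) (metis atLeastAtMost_iff crit_less_crit_iff less_irrefl nat_neq_iff)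

lemma in_block_bounds: "k \<in> {1..N} \<Longrightarrow> in_block a k i \<Longrightarrow> 1 \<le> i \<and> i < Memp a N"
  using block_less_crit[of k "Suc N" a] crit_Suc_eq_Memp[of a N] crit_ge_1[of k a]
  unfolding in_block_def by auto

lemma crit_mem_employees: "k \<in> {1..N} \<Longrightarrow> crit a k \<in> {1..Memp a N}"
  using in_block_bounds[of k N a "crit a k"] by (simp add: in_block_def)

lemma stable_subset_employees: "k \<in> {1..N} \<Longrightarrow> stable a k \<subseteq> {1..Memp a N}"
  using in_block_bounds[of k N a] by (force simp: in_block_iff)

lemma in_block_index_mono:
  "1 \<le> k \<Longrightarrow> 1 \<le> k' \<Longrightarrow> in_block a k i \<Longrightarrow> in_block a k' j \<Longrightarrow> i \<le> j \<Longrightarrow> k \<le> k'"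
  using block_less_crit[of k' k a] unfolding in_block_def by (meson leI le_trans not_less)

lemma in_block_index_unique:
  "1 \<le> k \<Longrightarrow> 1 \<le> k' \<Longrightarrow> in_block a k i \<Longrightarrow> in_block a k' i \<Longrightarrow> k = k'"
  using in_block_index_mono[of k k' a i i] in_block_index_mono[of k' k a i i] by simp

lemma employee_cases:
  assumes "i \<in> {1..Memp a N}"
  obtains "i = Memp a N" | k where "k \<in> {1..N}" "in_block a k i"
proof -
  have "\<exists>k\<in>{1..m}. in_block a k i" if "1 \<le> i" "i < crit a (Suc m)" for m
    using that
  proof (induction m)
    case (Suc m)
    show ?case
    proof (cases "i < crit a (Suc m)")
      case True
      then show ?thesis using Suc by auto
    next
      case False
      then have "in_block a (Suc m) i"
        using Suc.prems crit_Suc[of "Suc m" a] by (simp add: in_block_def)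
      then show ?thesis by auto
    qed
  qed (simp add: crit_def)
  then show ?thesis
    using that assms crit_Suc_eq_Memp[of a N] by (metis atLeastAtMost_iff order.not_eq_order_implies_strict)
qed

lemma card_stable: "card (stable a k) = a k"
proof -
  have "stable a k = {crit a k<..crit a k + a k}" unfolding stable_def by auto
  then show ?thesis by simp
qed

lemma resp_crit: "k \<in> {1..N} \<Longrightarrow> resp a N (crit a k) = real ((\<Sum>j=1..<k. a j) + a k)"
proof -
  assume k: "k \<in> {1..N}"
  have "(THE k'. k' \<in> {1..N} \<and> crit a k = crit a k') = k"
    using k in_block_index_unique[of k _ a "crit a k"] by (intro the_equality) (auto simp: in_block_def)
  moreover have "crit a k \<noteq> Memp a N"
    using in_block_bounds[OF k, of a "crit a k"] by (simp add: in_block_def)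
  ultimately have "resp a N (crit a k) = real (\<Sum>j=1..k. a j)"
    using k unfolding resp_def by auto
  moreover have "(\<Sum>j=1..k. a j) = (\<Sum>j=1..<k. a j) + a k"
    using k by (simp add: sum.last_plus)
  ultimately show ?thesis
    by (simp only:)
qed

lemma resp_stable: "k \<in> {1..N} \<Longrightarrow> i \<in> stable a k \<Longrightarrow> resp a N i = real (\<Sum>j=1..<k. a j)"
proof -
  assume k: "k \<in> {1..N}" and i: "i \<in> stable a k"
  have "in_block a k i"
    using i by (simp add: in_block_iff)
  then have unique: "k' = k" if "k' \<in> {1..N}" "in_block a k' i" for k'
    using that k in_block_index_unique[of k' k a i] by simp
  have "\<not> (\<exists>k'\<in>{1..N}. i = crit a k')"
  proof
    assume "\<exists>k'\<in>{1..N}. i = crit a k'"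
    then obtain k' where "k' \<in> {1..N}" "i = crit a k'" by blast
    with unique have "i = crit a k" by (simp add: in_block_def)
    with i show False by (simp add: stable_def)
  qed
  moreover have "(THE k'. k' \<in> {1..N} \<and> i \<in> stable a k') = k"
    using unique k i in_block_iff by (intro the_equality) blast+
  moreover have "i \<noteq> Memp a N"
    using in_block_bounds[OF k, of a i] i by (simp add: in_block_iff)
  moreover have "\<exists>k'\<in>{1..N}. i \<in> stable a k'"
    using k i by blast
  ultimately show ?thesis
    unfolding resp_def by (simp only: if_False if_True)
qed

lemma resp_Memp: "resp a N (Memp a N) = real (total a N)"
  unfolding resp_def by simp

lemma feasible_start_mono:
  "feasible a N W s \<Longrightarrow> 1 \<le> i \<Longrightarrow> i \<le> j \<Longrightarrow> j \<le> Memp a N \<Longrightarrow> s i \<le> s j"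
  unfolding feasible_def by auto

(* Since r_i = r_{i_k} - a_k for i stable in block k, this says that some stable employee of
   block k does not end before the critical one. *)
definition late :: "(nat \<Rightarrow> nat) \<Rightarrow> (nat \<Rightarrow> real) \<Rightarrow> nat \<Rightarrow> bool" where
  "late a s k \<longleftrightarrow> (\<exists>i\<in>stable a k. s (crit a k) + real (a k) \<le> s i)"

lemma bcount_crit_ge:
  assumes k: "k \<in> {1..N}" and "\<not> late a s k"
  shows "a k \<le> bcount a N s (crit a k)"
proof -
  have "stable a k \<subseteq> {j\<in>{1..Memp a N}. crit a k < j \<and> endt a N s j < endt a N s (crit a k)}"
  proof
    fix j assume j: "j \<in> stable a k"
    have "endt a N s j < endt a N s (crit a k)"
      using \<open>\<not> late a s k\<close> j unfolding late_def endt_def resp_stable[OF k j] resp_crit[OF k] by auto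
    then show "j \<in> {j\<in>{1..Memp a N}. crit a k < j \<and> endt a N s j < endt a N s (crit a k)}"
      using j stable_subset_employees[OF k, of a] by (auto simp: stable_def)
  qed
  then have "card (stable a k) \<le> bcount a N s (crit a k)"
    unfolding bcount_def by (rule card_mono[rotated]) simp
  then show ?thesis
    by (simp add: card_stable)
qed

lemma sum_bcount_crit_le_Btot:
  assumes "D \<subseteq> {1..N}"
  shows "(\<Sum>k\<in>D. bcount a N s (crit a k)) \<le> Btot a N s"
proof -
  have "(\<Sum>k\<in>D. bcount a N s (crit a k)) = (\<Sum>i\<in>crit a ` D. bcount a N s i)"
    using sum.reindex[OF inj_on_subset[OF inj_on_crit[of a N] assms], of "bcount a N s"] by simp
  also have "\<dots> \<le> Btot a N s"
    unfolding Btot_def using assms crit_mem_employees[of _ N a] by (intro sum_mono2) auto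
  finally show ?thesis .
qed

lemma feasible_start_ge_late_sum:
  assumes f: "feasible a N W s" and m: "m \<le> N"
  shows "real (\<Sum>k\<in>{k\<in>{1..m}. late a s k}. a k) \<le> s (crit a (Suc m))"
  using m
proof (induction m)
  case 0
  then show ?case
    using f by (simp add: feasible_def crit_def Memp_def)
next
  case (Suc m)
  have step: "crit a (Suc (Suc m)) = crit a (Suc m) + a (Suc m) + 1"
    using crit_Suc by simp
  have next_le_Memp: "crit a (Suc (Suc m)) \<le> Memp a N"
    using Suc.prems block_less_crit[of "Suc (Suc m)" "Suc N" a] crit_Suc_eq_Memp[of a N]
    by (cases "Suc m = N") auto
  have start_le: "s i \<le> s (crit a (Suc (Suc m)))" if "1 \<le> i" "i \<le> crit a (Suc (Suc m))" for i
    using feasible_start_mono[OF f that next_le_Memp] .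
  show ?case
  proof (cases "late a s (Suc m)")
    case False
    then have "{k\<in>{1..Suc m}. late a s k} = {k\<in>{1..m}. late a s k}"
      using le_Suc_eq by auto
    moreover have "s (crit a (Suc m)) \<le> s (crit a (Suc (Suc m)))"
      using start_le crit_ge_1[of "Suc m" a] step by simp
    ultimately show ?thesis
      using Suc by simp
  next
    case True
    then obtain i where i: "i \<in> stable a (Suc m)" "s (crit a (Suc m)) + real (a (Suc m)) \<le> s i"
      unfolding late_def by blast
    have "s i \<le> s (crit a (Suc (Suc m)))"
      using i(1) step by (intro start_le) (auto simp: stable_def)
    moreover have "{k\<in>{1..Suc m}. late a s k} = insert (Suc m) {k\<in>{1..m}. late a s k}"
      using True le_Suc_eq by auto
    ultimately show ?thesis
      using Suc i(2) by simp
  qed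
qed

lemma Btot_lower_bound:
  assumes f: "feasible a N W s"
  obtains D where "D \<subseteq> {1..N}" "W \<le> (\<Sum>k\<in>D. a k)" "(\<Sum>k\<in>D. a k) \<le> Btot a N s"
proof
  define D where "D = {k\<in>{1..N}. \<not> late a s k}"
  show D: "D \<subseteq> {1..N}" unfolding D_def by auto
  have "(\<Sum>k\<in>D. a k) \<le> (\<Sum>k\<in>D. bcount a N s (crit a k))"
    by (rule sum_mono) (auto simp: D_def intro: bcount_crit_ge)
  also have "\<dots> \<le> Btot a N s"
    using sum_bcount_crit_le_Btot[OF D] .
  finally show "(\<Sum>k\<in>D. a k) \<le> Btot a N s" .
  have "{1..N} - D = {k\<in>{1..N}. late a s k}"
    unfolding D_def by auto
  then have "real (\<Sum>k\<in>{1..N} - D. a k) \<le> s (Memp a N)"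
    using feasible_start_ge_late_sum[OF f order_refl] crit_Suc_eq_Memp[of a N] by simp
  moreover have "s (Memp a N) + real (total a N) \<le> Hbound a N W"
  proof -
    have "Memp a N \<in> {1..Memp a N}"
      by (simp add: Memp_def)
    then show ?thesis
      using f resp_Memp[of a N] unfolding feasible_def endt_def by fastforce
  qed
  moreover have "total a N = (\<Sum>k\<in>D. a k) + (\<Sum>k\<in>{1..N} - D. a k)"
    unfolding total_def using sum.subset_diff[OF D, of a] by simp
  ultimately show "W \<le> (\<Sum>k\<in>D. a k)"
    unfolding Hbound_def by linarith
qed

definition skipped :: "(nat \<Rightarrow> nat) \<Rightarrow> nat \<Rightarrow> nat set \<Rightarrow> nat \<Rightarrow> nat" where
  "skipped a N A' k = (\<Sum>j\<in>{j\<in>{1..N} - A'. j < k}. a j)"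

definition subset_schedule :: "(nat \<Rightarrow> nat) \<Rightarrow> nat \<Rightarrow> nat set \<Rightarrow> nat \<Rightarrow> real" where
  "subset_schedule a N A' i = real (\<Sum>j\<in>{j\<in>{1..N} - A'. crit a j < i}. a j)"

lemma skipped_mono: "k \<le> k' \<Longrightarrow> skipped a N A' k \<le> skipped a N A' k'"
  unfolding skipped_def by (rule sum_mono2) auto

lemma skipped_Suc:
  assumes "k \<in> {1..N}"
  shows "skipped a N A' (Suc k) = skipped a N A' k + (if k \<in> A' then 0 else a k)"
proof (cases "k \<in> A'")
  case True
  then have "{j\<in>{1..N} - A'. j < Suc k} = {j\<in>{1..N} - A'. j < k}"
    by (auto simp: less_Suc_eq)
  then show ?thesis
    unfolding skipped_def using True by simp
next
  case False
  then have "{j\<in>{1..N} - A'. j < Suc k} = insert k {j\<in>{1..N} - A'. j < k}"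
    using assms by (auto simp: less_Suc_eq)
  then show ?thesis
    unfolding skipped_def using False by simp
qed

lemma subset_schedule_crit:
  "k \<in> {1..N} \<Longrightarrow> subset_schedule a N A' (crit a k) = real (skipped a N A' k)"
  unfolding subset_schedule_def skipped_def
  by (rule arg_cong[where f = "\<lambda>J. real (sum a J)"]) (auto simp: crit_less_crit_iff)

lemma subset_schedule_stable:
  assumes k: "k \<in> {1..N}" and i: "i \<in> stable a k"
  shows "subset_schedule a N A' i = real (skipped a N A' (Suc k))"
proof -
  have "crit a j < i \<longleftrightarrow> j < Suc k" if "j \<in> {1..N}" for j
    using that k i block_less_crit[of k j a] crit_less_crit_iff[of j k a]
    by (cases j k rule: linorder_cases) (auto simp: stable_def)
  then show ?thesis
    unfolding subset_schedule_def skipped_def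
    by (intro arg_cong[where f = "\<lambda>J. real (sum a J)"]) auto
qed

lemma subset_schedule_Memp:
  "subset_schedule a N A' (Memp a N) = real (skipped a N A' (Suc N))"
proof -
  have "crit a j < Memp a N" if "j \<in> {1..N}" for j
    using in_block_bounds[OF that, of a "crit a j"] by (simp add: in_block_def)
  then show ?thesis
    unfolding subset_schedule_def skipped_def
    by (intro arg_cong[where f = "\<lambda>J. real (sum a J)"]) auto
qed

abbreviation level :: "(nat \<Rightarrow> nat) \<Rightarrow> nat \<Rightarrow> nat set \<Rightarrow> nat \<Rightarrow> nat" where
  "level a N A' k \<equiv> skipped a N A' k + (\<Sum>j=1..<k. a j)"

lemma endt_subset_schedule_crit:
  "k \<in> {1..N} \<Longrightarrow> endt a N (subset_schedule a N A') (crit a k) = real (level a N A' k + a k)"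
  unfolding endt_def by (simp add: subset_schedule_crit resp_crit)

lemma endt_subset_schedule_stable:
  "k \<in> {1..N} \<Longrightarrow> i \<in> stable a k \<Longrightarrow>
    endt a N (subset_schedule a N A') i = real (skipped a N A' (Suc k) + (\<Sum>j=1..<k. a j))"
  unfolding endt_def by (simp add: subset_schedule_stable resp_stable)

lemma endt_subset_schedule_Memp:
  "endt a N (subset_schedule a N A') (Memp a N) = real (level a N A' (Suc N))"
  unfolding endt_def subset_schedule_Memp resp_Memp total_def
  by (simp add: atLeastLessThanSuc_atLeastAtMost)

lemma endt_subset_schedule_bounds:
  assumes k: "k \<in> {1..N}" and i: "in_block a k i"
  shows "real (level a N A' k) \<le> endt a N (subset_schedule a N A') i"
    and "endt a N (subset_schedule a N A') i \<le> real (level a N A' k + a k)"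
  using i endt_subset_schedule_crit[OF k, of a A'] endt_subset_schedule_stable[OF k, of _ a A']
    skipped_Suc[OF k, of a A']
  by (auto simp: in_block_iff)

lemma level_add_le_level:
  assumes "1 \<le> k" "k < k'"
  shows "level a N A' k + a k \<le> level a N A' k'"
proof -
  have "(\<Sum>j=1..<k. a j) + a k = (\<Sum>j=1..<Suc k. a j)"
    using assms by (simp add: sum.atLeastLessThan_Suc)
  also have "\<dots> \<le> (\<Sum>j=1..<k'. a j)"
    using assms by (intro sum_mono2) auto
  finally show ?thesis
    using skipped_mono[of k k' a N A'] assms by simp
qed

lemma endt_subset_schedule_outside_block:
  assumes k: "k \<in> {1..N}" and i: "in_block a k i"
    and j: "j \<in> {1..Memp a N}" "i \<le> j" "\<not> in_block a k j"
  shows "endt a N (subset_schedule a N A') i \<le> endt a N (subset_schedule a N A') j"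
  using j(1)
proof (cases rule: employee_cases)
  case 1
  have "level a N A' k + a k \<le> level a N A' (Suc N)"
    using k by (intro level_add_le_level) auto
  then show ?thesis
    using endt_subset_schedule_bounds(2)[OF k i, of A'] unfolding 1 endt_subset_schedule_Memp
    by linarith
next
  case (2 k')
  then have "k < k'"
    using k i j in_block_index_mono[of k k' a i j] by (cases "k = k'") auto
  then have "level a N A' k + a k \<le> level a N A' k'"
    using k by (intro level_add_le_level) auto
  then show ?thesis
    using endt_subset_schedule_bounds(2)[OF k i, of A'] endt_subset_schedule_bounds(1)[OF 2, of A']
    by linarith
qed

lemma endt_subset_schedule_within_block:
  assumes pos: "0 < a k" and k: "k \<in> {1..N}" and i: "in_block a k i" and j: "in_block a k j" "i < j"
  shows "endt a N (subset_schedule a N A') j < endt a N (subset_schedule a N A') i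
    \<longleftrightarrow> i = crit a k \<and> k \<in> A'"
proof -
  have js: "j \<in> stable a k"
    using i j by (auto simp: in_block_def stable_def)
  show ?thesis
  proof (cases "i = crit a k")
    case True
    then show ?thesis
      using pos by (simp add: endt_subset_schedule_crit[OF k] endt_subset_schedule_stable[OF k js]
          skipped_Suc[OF k])
  next
    case False
    then have "i \<in> stable a k"
      using i by (simp add: in_block_iff)
    then show ?thesis
      using False by (simp add: endt_subset_schedule_stable[OF k] js)
  qed
qed

lemma bcount_subset_schedule:
  assumes pos: "0 < a k" and k: "k \<in> {1..N}" and i: "in_block a k i"
  shows "bcount a N (subset_schedule a N A') i = (if i = crit a k \<and> k \<in> A' then a k else 0)"
proof -
  let ?E = "endt a N (subset_schedule a N A')"
  have "in_block a k j" if "j \<in> {1..Memp a N}" "i < j" "?E j < ?E i" for j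
    using that endt_subset_schedule_outside_block[OF k i that(1), of A'] by fastforce
  then have "{j\<in>{1..Memp a N}. i < j \<and> ?E j < ?E i} = {j. in_block a k j \<and> i < j \<and> ?E j < ?E i}"
    by (fastforce dest: in_block_bounds[OF k])
  also have "\<dots> = (if i = crit a k \<and> k \<in> A' then stable a k else {})"
    using endt_subset_schedule_within_block[OF pos k i, of _ A'] i
    by (auto simp: stable_def in_block_def)
  finally show ?thesis
    unfolding bcount_def by (simp add: card_stable)
qed

lemma Btot_subset_schedule:
  assumes pos: "\<forall>j\<in>{1..N}. 0 < a j" and A': "A' \<subseteq> {1..N}"
  shows "Btot a N (subset_schedule a N A') = (\<Sum>k\<in>A'. a k)"
proof -
  let ?b = "bcount a N (subset_schedule a N A')"
  have crit_A': "crit a ` A' \<subseteq> {1..Memp a N}"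
    using A' crit_mem_employees[of _ N a] by auto
  have "?b i = 0" if "i \<in> {1..Memp a N} - crit a ` A'" for i
  proof -
    from that have "i \<in> {1..Memp a N}" by simp
    then show ?thesis
  proof (cases rule: employee_cases)
    case 1
    then show ?thesis
      unfolding bcount_def by simp
  next
    case (2 k)
    have "\<not> (i = crit a k \<and> k \<in> A')"
      using that by auto
    moreover have "0 < a k"
      using pos 2(1) by simp
    ultimately show ?thesis
      by (simp only: bcount_subset_schedule[OF _ 2] if_False)
  qed
  qed
  then have "Btot a N (subset_schedule a N A') = (\<Sum>i\<in>crit a ` A'. ?b i)"
    unfolding Btot_def using crit_A' by (intro sum.mono_neutral_right) auto
  also have "\<dots> = (\<Sum>k\<in>A'. ?b (crit a k))"
    using sum.reindex[OF inj_on_subset[OF inj_on_crit[of a N] A'], of ?b] by simp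
  also have "\<dots> = (\<Sum>k\<in>A'. a k)"
  proof (rule sum.cong)
    fix k assume "k \<in> A'"
    moreover have "in_block a k (crit a k)"
      by (simp add: in_block_def)
    ultimately show "?b (crit a k) = a k"
      using A' pos bcount_subset_schedule[of a k N "crit a k" A'] by auto
  qed simp
  finally show ?thesis .
qed

lemma subset_schedule_feasible:
  assumes A': "A' \<subseteq> {1..N}" and W: "(\<Sum>j\<in>A'. a j) = W"
  shows "feasible a N W (subset_schedule a N A')"
proof -
  let ?s = "subset_schedule a N A'"
  have "skipped a N A' (Suc N) = (\<Sum>j\<in>{1..N} - A'. a j)"
    unfolding skipped_def by (intro sum.cong) auto
  moreover have "(\<Sum>j=1..<Suc N. a j) = total a N"
    unfolding total_def by (simp add: atLeastLessThanSuc_atLeastAtMost)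
  ultimately have "level a N A' (Suc N) + W = 2 * total a N"
    unfolding total_def using sum.subset_diff[OF A', of a] W by simp
  then have "real (level a N A' (Suc N)) + real W = real (2 * total a N)"
    by (metis of_nat_add)
  then have "endt a N ?s (Memp a N) = Hbound a N W"
    unfolding endt_subset_schedule_Memp Hbound_def by linarith
  moreover have "endt a N ?s i \<le> endt a N ?s (Memp a N)" if "i \<in> {1..Memp a N}" for i
    using that
  proof (cases rule: employee_cases)
    case (2 k)
    moreover have "\<not> in_block a k (Memp a N)"
      using in_block_bounds[OF 2(1), of a "Memp a N"] by (meson less_irrefl)
    ultimately show ?thesis
      using that by (intro endt_subset_schedule_outside_block) auto
  qed simp
  moreover have "?s i \<le> ?s j" if "i \<le> j" for i j
    unfolding subset_schedule_def using that by (auto intro!: sum_mono2)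
  moreover have "0 \<le> ?s i" for i
    unfolding subset_schedule_def by (rule of_nat_0_le_iff)
  ultimately show ?thesis
    unfolding feasible_def by auto
qed

theorem theorem2:
  fixes a :: "nat \<Rightarrow> nat" and N W :: nat
  assumes "N \<ge> 1"
    and "\<forall>j\<in>{1..N}. a j > 0"
    and "W > 0"
    and "W \<le> (\<Sum>j=1..N. a j)"
  shows "(\<exists>s. optimal a N W s \<and> Btot a N s = W) \<longleftrightarrow>
         (\<exists>A'\<subseteq>{1..N}. (\<Sum>j\<in>A'. a j) = W)"
proof
  assume "\<exists>s. optimal a N W s \<and> Btot a N s = W"
  then obtain s where s: "feasible a N W s" "Btot a N s = W"
    unfolding optimal_def by blast
  obtain D where "D \<subseteq> {1..N}" "W \<le> (\<Sum>k\<in>D. a k)" "(\<Sum>k\<in>D. a k) \<le> Btot a N s"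
    using Btot_lower_bound[OF s(1)] .
  then show "\<exists>A'\<subseteq>{1..N}. (\<Sum>j\<in>A'. a j) = W"
    using s(2) le_antisym by blast
next
  assume "\<exists>A'\<subseteq>{1..N}. (\<Sum>j\<in>A'. a j) = W"
  then obtain A' where A': "A' \<subseteq> {1..N}" "(\<Sum>j\<in>A'. a j) = W"
    by blast
  let ?s = "subset_schedule a N A'"
  have "Btot a N ?s = W"
    using Btot_subset_schedule[OF assms(2) A'(1)] A'(2) by simp
  moreover have "W \<le> Btot a N s'" if f: "feasible a N W s'" for s'
  proof -
    obtain D where "D \<subseteq> {1..N}" "W \<le> (\<Sum>k\<in>D. a k)" "(\<Sum>k\<in>D. a k) \<le> Btot a N s'"
      using Btot_lower_bound[OF f] .
    then show ?thesis by simp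
  qed
  ultimately have "optimal a N W ?s"
    unfolding optimal_def using subset_schedule_feasible[OF A'] by simp
  then show "\<exists>s. optimal a N W s \<and> Btot a N s = W"
    using \<open>Btot a N ?s = W\<close> by blast
qed

end
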